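(* Let $G=(V,E)$ be a finite graph satisfying the $CD\psi(n,-K)$ condition for some $n>0$, $K>0$, where $\psi:(0,+\infty)\to\mathbb R$ is a $C^1$ concave function with $\psi'(1)=0$. Let $\sigma\in\mathbb R$ and $c:[0,\infty)\to\mathbb R$ continuous with either ($c\ge0$, $\sigma\le1$) or ($c\le0$, $\sigma\ge1$), and let $u$ be a positive solution of $\partial_tu=\Delta u+c(t)u^\sigma$ on $V$. Then for all vertices and all $t>0$, $$\Gamma^\psi(u)\le\frac{n}{2t}+Kn.$$
   Context: Graphs: $G=(V,E)$ is a connected, locally finite graph; each edge $xy$ carries a weight $w_{xy}>0$ (possibly asymmetric), and $\mu:V\to(0,\infty)$ is a vertex measure; $y\sim x$ means $xy\in E$. Laplacian: $\Delta f(x)=\frac{1}{\mu(x)}\sum_{y\sim x}w_{xy}(f(y)-f(x))$. For $f:V\to(0,\infty)$: $\Delta^\psi f(x)=\Delta\big[\psi\big(\tfrac{f}{f(x)}\big)\big](x)$; $\overline\psi(s)=\psi'(1)(s-1)-(\psi(s)-\psi(1))$, $\Gamma^\psi f=\Delta^{\overline\psi}f$; $(\Omega^\psi f)(x)=\Delta\big[\psi'\big(\tfrac{f}{f(x)}\big)\tfrac{f}{f(x)}\big(\tfrac{\Delta f}{f}-\tfrac{\Delta f(x)}{f(x)}\big)\big](x)$; $2\Gamma_2^\psi(f)=\Omega^\psi f+\frac{\Delta f\,\Delta^\psi f}{f}-\frac{\Delta(f\Delta^\psi f)}{f}$. $CD\psi(n,K)$: for every $f:V\to(0,\infty)$ and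 every vertex, $\Gamma_2^\psi(f)\ge\frac1n(\Delta^\psi f)^2+K\Gamma^\psi(f)$. A positive solution $u:V\times[0,\infty)\to(0,\infty)$ is continuously differentiable in $t$; operators are applied to $u(\cdot,t)$ at each fixed time. *)

theory Defs
  imports "HOL-Analysis.Analysis"
begin

definition finite_weighted_graph ::
  "'v set \<Rightarrow> ('v \<Rightarrow> 'v \<Rightarrow> bool) \<Rightarrow> ('v \<Rightarrow> 'v \<Rightarrow> real) \<Rightarrow> ('v \<Rightarrow> real) \<Rightarrow> bool" where
  "finite_weighted_graph V adj w mu \<longleftrightarrow>
     finite V \<and>
     (\<forall>x y. adj x y \<longrightarrow> x \<in> V \<and> y \<in> V) \<and>
     (\<forall>x y. adj x y \<longrightarrow> adj y x) \<and>
     (\<forall>x. \<not> adj x x) \<and>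
     (\<forall>x y. adj x y \<longrightarrow> w x y > 0) \<and>
     (\<forall>x\<in>V. mu x > 0) \<and>
     (\<forall>x\<in>V. \<forall>y\<in>V. adj\<^sup>*\<^sup>* x y)"

definition lap ::
  "'v set \<Rightarrow> ('v \<Rightarrow> 'v \<Rightarrow> bool) \<Rightarrow> ('v \<Rightarrow> 'v \<Rightarrow> real) \<Rightarrow> ('v \<Rightarrow> real) \<Rightarrow> ('v \<Rightarrow> real) \<Rightarrow> 'v \<Rightarrow> real" where
  "lap V adj w mu f x = (1 / mu x) * (\<Sum>y\<in>{y\<in>V. adj x y}. w x y * (f y - f x))"

definition lap_psi ::
  "'v set \<Rightarrow> ('v \<Rightarrow> 'v \<Rightarrow> bool) \<Rightarrow> ('v \<Rightarrow> 'v \<Rightarrow> real) \<Rightarrow> ('v \<Rightarrow> real) \<Rightarrow> (real \<Rightarrow> real)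
    \<Rightarrow> ('v \<Rightarrow> real) \<Rightarrow> 'v \<Rightarrow> real" where
  "lap_psi V adj w mu \<psi> f x = lap V adj w mu (\<lambda>y. \<psi> (f y / f x)) x"

definition psi_bar :: "(real \<Rightarrow> real) \<Rightarrow> real \<Rightarrow> real" where
  "psi_bar \<psi> s = deriv \<psi> 1 * (s - 1) - (\<psi> s - \<psi> 1)"

definition Gamma_psi ::
  "'v set \<Rightarrow> ('v \<Rightarrow> 'v \<Rightarrow> bool) \<Rightarrow> ('v \<Rightarrow> 'v \<Rightarrow> real) \<Rightarrow> ('v \<Rightarrow> real) \<Rightarrow> (real \<Rightarrow> real)
    \<Rightarrow> ('v \<Rightarrow> real) \<Rightarrow> 'v \<Rightarrow> real" where
  "Gamma_psi V adj w mu \<psi> f x = lap_psi V adj w mu (psi_bar \<psi>) f x"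

definition Omega_psi ::
  "'v set \<Rightarrow> ('v \<Rightarrow> 'v \<Rightarrow> bool) \<Rightarrow> ('v \<Rightarrow> 'v \<Rightarrow> real) \<Rightarrow> ('v \<Rightarrow> real) \<Rightarrow> (real \<Rightarrow> real)
    \<Rightarrow> ('v \<Rightarrow> real) \<Rightarrow> 'v \<Rightarrow> real" where
  "Omega_psi V adj w mu \<psi> f x =
     lap V adj w mu (\<lambda>y. deriv \<psi> (f y / f x) * (f y / f x) *
        (lap V adj w mu f y / f y - lap V adj w mu f x / f x)) x"

definition Gamma2_psi ::
  "'v set \<Rightarrow> ('v \<Rightarrow> 'v \<Rightarrow> bool) \<Rightarrow> ('v \<Rightarrow> 'v \<Rightarrow> real) \<Rightarrow> ('v \<Rightarrow> real) \<Rightarrow> (real \<Rightarrow> real)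
    \<Rightarrow> ('v \<Rightarrow> real) \<Rightarrow> 'v \<Rightarrow> real" where
  "Gamma2_psi V adj w mu \<psi> f x =
     (Omega_psi V adj w mu \<psi> f x
      + lap V adj w mu f x * lap_psi V adj w mu \<psi> f x / f x
      - lap V adj w mu (\<lambda>y. f y * lap_psi V adj w mu \<psi> f y) x / f x) / 2"

definition CD_psi ::
  "'v set \<Rightarrow> ('v \<Rightarrow> 'v \<Rightarrow> bool) \<Rightarrow> ('v \<Rightarrow> 'v \<Rightarrow> real) \<Rightarrow> ('v \<Rightarrow> real) \<Rightarrow> (real \<Rightarrow> real)
    \<Rightarrow> real \<Rightarrow> real \<Rightarrow> bool" where
  "CD_psi V adj w mu \<psi> n K \<longleftrightarrow>
     (\<forall>f. (\<forall>x\<in>V. f x > 0) \<longrightarrow>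
        (\<forall>x\<in>V. Gamma2_psi V adj w mu \<psi> f x
                 \<ge> (1 / n) * (lap_psi V adj w mu \<psi> f x)\<^sup>2 + K * Gamma_psi V adj w mu \<psi> f x))"

end

theory Submission
  imports Defs
begin

(* Write \<Gamma>(x,t) for \<Gamma>^\<psi>(u(.,t))(x). At a vertex x where \<Gamma>(.,t) is maximal, the time
   derivative of \<Gamma> is -\<Omega>^\<psi>(u) minus the Laplacian at x of the reaction term
   \<psi>'(u/u(x)) (u/u(x)) c (u^(\<sigma>-1) - u(x)^(\<sigma>-1)). That term vanishes at x and is nonnegative
   elsewhere: by concavity and \<psi>'(1) = 0, \<psi>'(u(y)/u(x)) has the sign of u(x) - u(y), and by the
   hypothesis on c and \<sigma> so does c (u(y)^(\<sigma>-1) - u(x)^(\<sigma>-1)). Maximality also gives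
   2\<Gamma>_2^\<psi> \<le> \<Omega>^\<psi> at x, so CD\<psi>(n,-K) yields d\<Gamma>/dt \<le> -(2/n)\<Gamma>^2 + 2K\<Gamma> there. The barrier
   h(t) = n/(2t) + Kn satisfies h' > -(2/n)h^2 + 2Kh and blows up at t = 0, so max_x \<Gamma>(x,t) can
   never reach it. *)

lemma concave_on_deriv_antimono:
  fixes \<psi> :: "real \<Rightarrow> real"
  assumes concave: "concave_on S \<psi>" and "open S" and "a \<in> S" "b \<in> S"
    and "\<psi> differentiable (at a)" "\<psi> differentiable (at b)"
  shows "(deriv \<psi> a - deriv \<psi> b) * (a - b) \<le> 0"
proof -
  have convex: "convex_on S (\<lambda>s. - \<psi> s)"
    using concave by (simp add: concave_on_def)
  have connected: "connected S"
    using concave by (simp add: concave_on_imp_convex convex_connected)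
  have tangent: "- \<psi> p - - \<psi> q \<ge> - deriv \<psi> q * (p - q)"
    if "p \<in> S" "q \<in> S" "\<psi> differentiable (at q)" for p q
  proof (rule convex_on_imp_above_tangent[OF convex connected])
    show "q \<in> interior S"
      using \<open>open S\<close> \<open>q \<in> S\<close> by (simp add: interior_open)
    show "((\<lambda>s. - \<psi> s) has_field_derivative - deriv \<psi> q) (at q within S)"
      using \<open>\<psi> differentiable (at q)\<close>
      by (simp add: DERIV_deriv_iff_real_differentiable[symmetric] DERIV_minus
          has_field_derivative_at_within)
  qed (use that in auto)
  show ?thesis
    using tangent[of a b] tangent[of b a] assms by argo
qed

lemma reaction_term_nonneg:
  fixes \<psi> :: "real \<Rightarrow> real"
  assumes psi_diff: "\<forall>s>0. \<psi> differentiable (at s)"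
    and psi_concave: "concave_on {0<..} \<psi>" and psi_d1: "deriv \<psi> 1 = 0"
    and c_sigma: "(c \<ge> 0 \<and> \<sigma> \<le> 1) \<or> (c \<le> 0 \<and> \<sigma> \<ge> 1)"
    and a: "a > 0" and b: "b > 0"
  shows "0 \<le> deriv \<psi> (a / b) * (a / b) * (c * (a powr \<sigma> / a - b powr \<sigma> / b))"
proof -
  have "(deriv \<psi> (a / b) - deriv \<psi> 1) * (a / b - 1) \<le> 0"
    using concave_on_deriv_antimono[OF psi_concave] psi_diff a b by simp
  then have psi_sign: "0 \<le> deriv \<psi> (a / b) * (b - a)"
    using psi_d1 b by (simp add: divide_simps mult_le_0_iff algebra_simps split: if_splits)
  have rate_sign: "0 \<le> c * (a powr (\<sigma> - 1) - b powr (\<sigma> - 1)) * (b - a)"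
  proof (cases "a \<le> b")
    case True
    then show ?thesis
      using c_sigma powr_mono2'[of "\<sigma> - 1" a b] powr_mono2[of "\<sigma> - 1" a b] a
      by (auto simp: zero_le_mult_iff mult_le_0_iff)
  next
    case False
    then show ?thesis
      using c_sigma powr_mono2'[of "\<sigma> - 1" b a] powr_mono2[of "\<sigma> - 1" b a] b
      by (auto simp: zero_le_mult_iff mult_le_0_iff)
  qed
  \<comment> \<open>Both factors have the sign of \<open>b - a\<close>.\<close>
  define p where "p = deriv \<psi> (a / b)"
  define q where "q = c * (a powr (\<sigma> - 1) - b powr (\<sigma> - 1))"
  have "0 \<le> p * q"
  proof (cases "a = b")
    case False
    have "0 \<le> (p * (b - a)) * (q * (b - a))"
      using psi_sign rate_sign unfolding p_def q_def by simp
    also have "\<dots> = (p * q) * (b - a)\<^sup>2"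
      by (simp add: power2_eq_square)
    finally show ?thesis
      using False by (simp add: zero_le_mult_iff)
  qed (simp add: q_def)
  then have "0 \<le> p * (a / b) * q"
    using a b by (simp add: mult.commute mult.left_commute)
  moreover have "x powr \<sigma> / x = x powr (\<sigma> - 1)" if "x > 0" for x :: real
    using that by (simp add: powr_diff)
  ultimately show ?thesis
    using a b unfolding p_def q_def by simp
qed

lemma psi_ratio_has_real_derivative:
  fixes \<psi> :: "real \<Rightarrow> real"
  assumes "\<psi> differentiable (at (f t / g t))"
    and f: "(f has_real_derivative f') (at t within S)" and "f t > 0"
    and g: "(g has_real_derivative g') (at t within S)" and "g t > 0"
  shows "((\<lambda>s. \<psi> (f s / g s)) has_real_derivative
      deriv \<psi> (f t / g t) * (f t / g t) * (f' / f t - g' / g t)) (at t within S)"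
proof -
  have psi': "(\<psi> has_real_derivative deriv \<psi> (f t / g t)) (at (f t / g t))"
    using assms(1) by (simp add: DERIV_deriv_iff_real_differentiable)
  have "(f' * g t - f t * g') / (g t * g t) = (f t / g t) * (f' / f t - g' / g t)"
    using \<open>f t > 0\<close> \<open>g t > 0\<close> by (simp add: field_simps)
  then have "((\<lambda>s. f s / g s) has_real_derivative (f t / g t) * (f' / f t - g' / g t))
      (at t within S)"
    using DERIV_divide[OF f g] \<open>g t > 0\<close> by simp
  from DERIV_chain2[OF psi' this] show ?thesis
    by (simp only: mult.assoc)
qed

section \<open>A maximum principle against a blowing-up barrier\<close>

lemma first_hitting_time:
  fixes g :: "'i \<Rightarrow> real \<Rightarrow> real"
  assumes I: "finite I" and cont: "\<And>i. i \<in> I \<Longrightarrow> continuous_on {a..b} (g i)"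
    and start: "\<And>i. i \<in> I \<Longrightarrow> g i a < 0"
    and hit: "i0 \<in> I" "0 \<le> g i0 b" and "a \<le> b"
  obtains t1 i1 where "a < t1" "t1 \<le> b" "i1 \<in> I" "g i1 t1 = 0"
    "\<And>i s. i \<in> I \<Longrightarrow> a \<le> s \<Longrightarrow> s < t1 \<Longrightarrow> g i s < 0"
    "\<And>i. i \<in> I \<Longrightarrow> g i t1 \<le> 0"
proof -
  define T where "T = (\<Union>i\<in>I. {a..b} \<inter> g i -` {0..})"
  have "closed T"
    unfolding T_def using I cont by (intro closed_UN ballI continuous_closed_preimage) auto
  moreover have "b \<in> T" "bdd_below T"
    using hit \<open>a \<le> b\<close> unfolding T_def by (auto intro: bdd_belowI[of _ a])
  ultimately have "Inf T \<in> T"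
    using closed_contains_Inf by blast
  then obtain i1 where i1: "i1 \<in> I" "a \<le> Inf T" "Inf T \<le> b" "0 \<le> g i1 (Inf T)"
    unfolding T_def by auto
  have before: "g i s < 0" if "i \<in> I" "a \<le> s" "s < Inf T" for i s
  proof (rule ccontr)
    assume "\<not> g i s < 0"
    then have "s \<in> T"
      using that i1 unfolding T_def by (intro UN_I[of i]) auto
    then show False
      using cInf_lower[OF _ \<open>bdd_below T\<close>] \<open>s < Inf T\<close> by fastforce
  qed
  have "a < Inf T"
    using i1 start[OF i1(1)] by (cases "a = Inf T") auto
  have at_hit: "g i (Inf T) \<le> 0" if "i \<in> I" for i
  proof (rule continuous_le_on_closure[of "{a..<Inf T}" "g i"])
    show "continuous_on (closure {a..<Inf T}) (g i)"
      using \<open>a < Inf T\<close> i1 by (auto intro: continuous_on_subset[OF cont[OF that]])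
    show "Inf T \<in> closure {a..<Inf T}"
      using \<open>a < Inf T\<close> by simp
  qed (use before[OF that] in fastforce)
  show thesis
    using that[of "Inf T" i1] i1 \<open>a < Inf T\<close> before at_hit by force
qed

lemma below_barrier_on_interval:
  fixes F F' :: "'i \<Rightarrow> real \<Rightarrow> real" and h h' :: "real \<Rightarrow> real"
  assumes "finite I"
    and "\<And>i. i \<in> I \<Longrightarrow> continuous_on {a..b} (F i)" and "continuous_on {a..b} h"
    and F_deriv: "\<And>i t. i \<in> I \<Longrightarrow> t \<in> {a<..b} \<Longrightarrow> (F i has_real_derivative F' i t) (at t)"
    and h_deriv: "\<And>t. t \<in> {a<..b} \<Longrightarrow> (h has_real_derivative h' t) (at t)"
    and "\<And>i. i \<in> I \<Longrightarrow> F i a < h a"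
    and touching: "\<And>i t. i \<in> I \<Longrightarrow> t \<in> {a<..b} \<Longrightarrow> F i t = h t \<Longrightarrow> \<forall>j\<in>I. F j t \<le> h t \<Longrightarrow>
                     F' i t < h' t"
    and "i \<in> I" and "a \<le> b"
  shows "F i b < h b"
proof (rule ccontr)
  \<comment> \<open>Otherwise some \<open>F i1\<close> touches \<open>h\<close> from below at a first time \<open>t1\<close>; as \<open>F i1 - h\<close> has
    negative derivative there, it was positive just before \<open>t1\<close>.\<close>
  assume "\<not> F i b < h b"
  obtain t1 i1 where t1: "a < t1" "t1 \<le> b" and "i1 \<in> I" and hit: "F i1 t1 - h t1 = 0"
    and before: "\<And>j s. j \<in> I \<Longrightarrow> a \<le> s \<Longrightarrow> s < t1 \<Longrightarrow> F j s - h s < 0"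
    and at_hit: "\<And>j. j \<in> I \<Longrightarrow> F j t1 - h t1 \<le> 0"
    by (rule first_hitting_time[of I a b "\<lambda>j s. F j s - h s" i])
      (use assms \<open>\<not> F i b < h b\<close> in \<open>auto intro: continuous_on_diff\<close>)
  have "F' i1 t1 - h' t1 < 0"
    using touching[OF \<open>i1 \<in> I\<close>] t1 hit at_hit by simp
  moreover have "((\<lambda>s. F i1 s - h s) has_real_derivative F' i1 t1 - h' t1) (at t1)"
    using F_deriv[OF \<open>i1 \<in> I\<close>] h_deriv t1 by (simp add: DERIV_diff)
  ultimately obtain d where "d > 0"
    and decreasing: "\<forall>e>0. e < d \<longrightarrow> F i1 t1 - h t1 < F i1 (t1 - e) - h (t1 - e)"
    using DERIV_neg_dec_left by blast
  define e where "e = min (d / 2) ((t1 - a) / 2)"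
  have "0 < e" "e < d"
    using \<open>d > 0\<close> t1 unfolding e_def by auto
  have "e \<le> (t1 - a) / 2"
    unfolding e_def by (rule min.cobounded2)
  have "F i1 t1 - h t1 < F i1 (t1 - e) - h (t1 - e)"
    using decreasing \<open>0 < e\<close> \<open>e < d\<close> by blast
  moreover have "F i1 (t1 - e) - h (t1 - e) < 0"
    using before[OF \<open>i1 \<in> I\<close>] \<open>0 < e\<close> \<open>e \<le> (t1 - a) / 2\<close> by simp
  ultimately show False
    using hit by simp
qed

lemma below_blowup_barrier:
  fixes F F' :: "'i \<Rightarrow> real \<Rightarrow> real" and h h' :: "real \<Rightarrow> real"
  assumes I: "finite I"
    and F_deriv: "\<And>i t. i \<in> I \<Longrightarrow> 0 \<le> t \<Longrightarrow> (F i has_real_derivative F' i t) (at t within {0..})"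
    and h_deriv: "\<And>t. 0 < t \<Longrightarrow> (h has_real_derivative h' t) (at t)"
    and h_blowup: "filterlim h at_top (at_right 0)"
    and "\<And>i t. i \<in> I \<Longrightarrow> 0 < t \<Longrightarrow> F i t = h t \<Longrightarrow> \<forall>j\<in>I. F j t \<le> h t \<Longrightarrow>
                     F' i t < h' t"
    and "i \<in> I" and "0 < t"
  shows "F i t < h t"
proof -
  have F_cont: "continuous_on {0..} (F j)" if "j \<in> I" for j
    using F_deriv[OF that] by (intro DERIV_continuous_on[of _ _ "F' j"]) auto
  have F_deriv_at: "(F j has_real_derivative F' j s) (at s)" if "j \<in> I" "0 < s" for j s
  proof -
    have "(F j has_real_derivative F' j s) (at s within {0<..})"
      by (rule DERIV_subset[OF F_deriv[OF that(1) less_imp_le[OF that(2)]]]) auto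
    then show ?thesis
      using that(2) by (simp add: at_within_open[of s "{0<..}"])
  qed
  have "bounded (\<Union>j\<in>I. F j ` {0..t})"
    using I F_cont by (intro compact_imp_bounded compact_UN compact_continuous_image)
      (auto intro: continuous_on_subset[of "{0..}"])
  then obtain B where "\<forall>y\<in>(\<Union>j\<in>I. F j ` {0..t}). \<bar>y\<bar> \<le> B"
    unfolding bounded_real by blast
  then have B: "F j s \<le> B" if "j \<in> I" "s \<in> {0..t}" for j s
    using that by (force dest: abs_le_D1)
  obtain b where "b > 0" and b: "\<And>s. 0 < s \<Longrightarrow> s < b \<Longrightarrow> B < h s"
    using h_blowup unfolding filterlim_at_top_dense eventually_at_right_field by blast
  define \<delta> where "\<delta> = min (t / 2) (b / 2)"
  have "0 < \<delta>" "\<delta> < t" "\<delta> < b"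
    using \<open>0 < t\<close> \<open>b > 0\<close> unfolding \<delta>_def by auto
  have h_cont: "continuous_on {\<delta>..t} h"
    using DERIV_isCont[OF h_deriv] \<open>0 < \<delta>\<close> by (intro continuous_at_imp_continuous_on) auto
  show ?thesis
  proof (rule below_barrier_on_interval[of I \<delta> t F h F' h'])
    show "F j \<delta> < h \<delta>" if "j \<in> I" for j
      using B[OF that, of \<delta>] b[of \<delta>] \<open>0 < \<delta>\<close> \<open>\<delta> < t\<close> \<open>\<delta> < b\<close> by simp
    show "continuous_on {\<delta>..t} (F j)" if "j \<in> I" for j
      by (rule continuous_on_subset[OF F_cont[OF that]]) (use \<open>0 < \<delta>\<close> in auto)
  qed (use assms F_cont F_deriv_at h_cont \<open>0 < \<delta>\<close> \<open>\<delta> < t\<close> in auto)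
qed

lemma riccati_strict_supersolution:
  fixes n K s :: real
  assumes "0 < n" and "0 < K"
  shows "filterlim (\<lambda>s. n / (2 * s) + K * n) at_top (at_right 0)"
    and "0 < s \<Longrightarrow> ((\<lambda>s. n / (2 * s) + K * n) has_real_derivative - n / (2 * s\<^sup>2)) (at s)"
    and "0 < s \<Longrightarrow>
      - 2 / n * (n / (2 * s) + K * n)\<^sup>2 + 2 * K * (n / (2 * s) + K * n) < - n / (2 * s\<^sup>2)"
proof -
  have "filterlim (\<lambda>s. K * n + n / 2 * inverse s) at_top (at_right 0)"
    using \<open>0 < n\<close> by (intro filterlim_tendsto_add_at_top[OF tendsto_const]
        filterlim_tendsto_pos_mult_at_top[OF tendsto_const] filterlim_inverse_at_top_right) auto
  moreover have "(\<lambda>s. K * n + n / 2 * inverse s) = (\<lambda>s. n / (2 * s) + K * n)"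
    by (auto simp: fun_eq_iff field_simps)
  ultimately show "filterlim (\<lambda>s. n / (2 * s) + K * n) at_top (at_right 0)"
    by simp
  assume "0 < s"
  then show "((\<lambda>s. n / (2 * s) + K * n) has_real_derivative - n / (2 * s\<^sup>2)) (at s)"
    by (auto intro!: derivative_eq_intros simp: power2_eq_square field_simps)
  have "- 2 / n * (n / (2 * s) + K * n)\<^sup>2 + 2 * K * (n / (2 * s) + K * n)
      = - n / (2 * s\<^sup>2) - K * n / s"
    using \<open>0 < s\<close> \<open>0 < n\<close> by (simp add: field_simps power2_eq_square)
  also have "\<dots> < - n / (2 * s\<^sup>2)"
    using \<open>0 < s\<close> \<open>0 < n\<close> \<open>0 < K\<close> by simp
  finally show "- 2 / n * (n / (2 * s) + K * n)\<^sup>2 + 2 * K * (n / (2 * s) + K * n) < - n / (2 * s\<^sup>2)" .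
qed

lemma lap_const: "lap V adj w mu (\<lambda>_. a) x = 0"
  by (simp add: lap_def)

lemma lap_cmult: "lap V adj w mu (\<lambda>y. a * f y) x = a * lap V adj w mu f x"
  by (simp add: lap_def sum_distrib_left algebra_simps)

lemma lap_minus: "lap V adj w mu (\<lambda>y. - f y) x = - lap V adj w mu f x"
proof -
  have "\<And>y. w x y * (- f y - - f x) = - (w x y * (f y - f x))"
    by algebra
  then show ?thesis
    unfolding lap_def by (simp add: sum_negf)
qed

lemma lap_add:
  "lap V adj w mu (\<lambda>y. f y + g y) x = lap V adj w mu f x + lap V adj w mu g x"
proof -
  have "\<And>y. w x y * (f y + g y - (f x + g x)) = w x y * (f y - f x) + w x y * (g y - g x)"
    by algebra
  then show ?thesis
    unfolding lap_def by (simp add: sum.distrib distrib_left)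
qed

lemma lap_diff:
  "lap V adj w mu (\<lambda>y. f y - g y) x = lap V adj w mu f x - lap V adj w mu g x"
  using lap_add[of V adj w mu f "\<lambda>y. - g y" x] by (simp add: lap_minus)

lemma lap_nonneg_at_min:
  assumes G: "finite_weighted_graph V adj w mu" and x: "x \<in> V"
    and min: "\<And>y. adj x y \<Longrightarrow> f x \<le> f y"
  shows "0 \<le> lap V adj w mu f x"
proof -
  have mu_pos: "mu x > 0" and w_pos: "\<And>y. adj x y \<Longrightarrow> w x y > 0"
    using G x unfolding finite_weighted_graph_def by auto
  have "0 \<le> (\<Sum>y\<in>{y\<in>V. adj x y}. w x y * (f y - f x))"
    using w_pos min by (intro sum_nonneg) (simp add: less_imp_le)
  then show ?thesis
    using mu_pos unfolding lap_def by simp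
qed

lemma lap_mult_le_at_max:
  assumes G: "finite_weighted_graph V adj w mu" and x: "x \<in> V"
    and f_nonneg: "\<forall>y\<in>V. 0 \<le> f y" and max: "\<forall>y\<in>V. g y \<le> g x"
  shows "lap V adj w mu (\<lambda>y. f y * g y) x \<le> g x * lap V adj w mu f x"
proof -
  have "0 \<le> lap V adj w mu (\<lambda>y. g x * f y - f y * g y) x"
  proof (rule lap_nonneg_at_min[OF G x])
    fix y assume "adj x y"
    then have "y \<in> V"
      using G unfolding finite_weighted_graph_def by blast
    then show "g x * f x - f x * g x \<le> g x * f y - f y * g y"
      using f_nonneg max by (simp add: mult.commute mult_left_mono)
  qed
  then show ?thesis
    by (simp add: lap_diff lap_cmult)
qed

section \<open>Gamma calculus at a vertex maximising Gamma_psi\<close>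

lemma lap_psi_eq_neg_Gamma_psi:
  assumes "deriv \<psi> 1 = 0"
  shows "lap_psi V adj w mu \<psi> f x = - Gamma_psi V adj w mu \<psi> f x"
  using assms lap_diff[of V adj w mu "\<lambda>_. \<psi> 1" "\<lambda>y. \<psi> (f y / f x)" x]
  by (simp add: Gamma_psi_def lap_psi_def psi_bar_def lap_const)

lemma Gamma2_psi_le_Omega_psi_at_max:
  assumes G: "finite_weighted_graph V adj w mu" and psi_d1: "deriv \<psi> 1 = 0"
    and f_pos: "\<forall>y\<in>V. 0 < f y" and x: "x \<in> V"
    and max: "\<forall>y\<in>V. Gamma_psi V adj w mu \<psi> f y \<le> Gamma_psi V adj w mu \<psi> f x"
  shows "2 * Gamma2_psi V adj w mu \<psi> f x \<le> Omega_psi V adj w mu \<psi> f x"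
proof -
  have "lap V adj w mu (\<lambda>y. f y * Gamma_psi V adj w mu \<psi> f y) x
      \<le> Gamma_psi V adj w mu \<psi> f x * lap V adj w mu f x"
    using f_pos by (intro lap_mult_le_at_max[OF G x _ max]) (simp add: less_imp_le)
  then show ?thesis
    using f_pos x
    by (simp add: Gamma2_psi_def lap_psi_eq_neg_Gamma_psi[OF psi_d1] lap_minus divide_simps mult.commute)
qed

lemma Omega_psi_ge_at_max:
  assumes G: "finite_weighted_graph V adj w mu" and n: "n > 0"
    and CD: "CD_psi V adj w mu \<psi> n (- K)" and psi_d1: "deriv \<psi> 1 = 0"
    and f_pos: "\<forall>y\<in>V. 0 < f y" and x: "x \<in> V"
    and max: "\<forall>y\<in>V. Gamma_psi V adj w mu \<psi> f y \<le> Gamma_psi V adj w mu \<psi> f x"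
  shows "2 / n * (Gamma_psi V adj w mu \<psi> f x)\<^sup>2 - 2 * K * Gamma_psi V adj w mu \<psi> f x
      \<le> Omega_psi V adj w mu \<psi> f x"
proof -
  have "1 / n * (Gamma_psi V adj w mu \<psi> f x)\<^sup>2 - K * Gamma_psi V adj w mu \<psi> f x
      \<le> Gamma2_psi V adj w mu \<psi> f x"
    using CD f_pos x unfolding CD_psi_def by (simp add: lap_psi_eq_neg_Gamma_psi[OF psi_d1])
  then show ?thesis
    using Gamma2_psi_le_Omega_psi_at_max[OF G psi_d1 f_pos x max] by simp
qed

lemma Gamma_psi_has_real_derivative:
  fixes \<psi> :: "real \<Rightarrow> real" and f :: "'v \<Rightarrow> real \<Rightarrow> real"
  assumes psi_diff: "\<forall>s>0. \<psi> differentiable (at s)" and psi_d1: "deriv \<psi> 1 = 0"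
    and x: "x \<in> V" and f_pos: "\<forall>y\<in>V. 0 < f y t"
    and f_deriv: "\<forall>y\<in>V. (f y has_real_derivative f' y) (at t within S)"
  shows "((\<lambda>s. Gamma_psi V adj w mu \<psi> (\<lambda>y. f y s) x) has_real_derivative
      - lap V adj w mu (\<lambda>y. deriv \<psi> (f y t / f x t) * (f y t / f x t) *
                                (f' y / f y t - f' x / f x t)) x) (at t within S)"
proof -
  define \<phi> where "\<phi> y = deriv \<psi> (f y t / f x t) * (f y t / f x t) * (f' y / f y t - f' x / f x t)"
    for y
  have ratio: "((\<lambda>s. \<psi> (f y s / f x s)) has_real_derivative \<phi> y) (at t within S)" if "y \<in> V" for y
    unfolding \<phi>_def using that x f_pos f_deriv psi_diff
    by (intro psi_ratio_has_real_derivative) auto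
  have "(\<lambda>s. Gamma_psi V adj w mu \<psi> (\<lambda>y. f y s) x)
      = (\<lambda>s. 1 / mu x * (\<Sum>y\<in>{y\<in>V. adj x y}. w x y * (\<psi> (f x s / f x s) - \<psi> (f y s / f x s))))"
    by (simp add: Gamma_psi_def lap_psi_def psi_bar_def lap_def psi_d1)
  moreover have "((\<lambda>s. 1 / mu x * (\<Sum>y\<in>{y\<in>V. adj x y}. w x y * (\<psi> (f x s / f x s) - \<psi> (f y s / f x s))))
      has_real_derivative 1 / mu x * (\<Sum>y\<in>{y\<in>V. adj x y}. w x y * (\<phi> x - \<phi> y))) (at t within S)"
    by (intro DERIV_cmult DERIV_sum DERIV_diff ratio) (use x in auto)
  moreover have "1 / mu x * (\<Sum>y\<in>{y\<in>V. adj x y}. w x y * (\<phi> x - \<phi> y)) = - lap V adj w mu \<phi> x"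
    using lap_minus[of V adj w mu \<phi> x] by (simp add: lap_def algebra_simps)
  ultimately show ?thesis
    unfolding \<phi>_def by simp
qed

lemma Gamma_psi_deriv_le_at_max:
  fixes \<psi> :: "real \<Rightarrow> real"
  assumes G: "finite_weighted_graph V adj w mu" and n: "n > 0"
    and CD: "CD_psi V adj w mu \<psi> n (- K)"
    and psi_diff: "\<forall>s>0. \<psi> differentiable (at s)"
    and psi_concave: "concave_on {0<..} \<psi>" and psi_d1: "deriv \<psi> 1 = 0"
    and c_sigma: "(c \<ge> 0 \<and> \<sigma> \<le> 1) \<or> (c \<le> 0 \<and> \<sigma> \<ge> 1)"
    and f_pos: "\<forall>y\<in>V. 0 < f y" and x: "x \<in> V"
    and max: "\<forall>y\<in>V. Gamma_psi V adj w mu \<psi> f y \<le> Gamma_psi V adj w mu \<psi> f x"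
  shows "- lap V adj w mu (\<lambda>y. deriv \<psi> (f y / f x) * (f y / f x) *
            ((lap V adj w mu f y + c * f y powr \<sigma>) / f y
             - (lap V adj w mu f x + c * f x powr \<sigma>) / f x)) x
      \<le> - 2 / n * (Gamma_psi V adj w mu \<psi> f x)\<^sup>2 + 2 * K * Gamma_psi V adj w mu \<psi> f x"
proof -
  define R where "R y = deriv \<psi> (f y / f x) * (f y / f x) * (c * (f y powr \<sigma> / f y - f x powr \<sigma> / f x))"
    for y
  have split: "deriv \<psi> (f y / f x) * (f y / f x) *
        ((lap V adj w mu f y + c * f y powr \<sigma>) / f y - (lap V adj w mu f x + c * f x powr \<sigma>) / f x)
      = deriv \<psi> (f y / f x) * (f y / f x) * (lap V adj w mu f y / f y - lap V adj w mu f x / f x) + R y"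
    for y
    unfolding R_def by (simp add: add_divide_distrib algebra_simps)
  have "0 \<le> lap V adj w mu R x"
  proof (rule lap_nonneg_at_min[OF G x])
    fix y assume "adj x y"
    then have "y \<in> V"
      using G unfolding finite_weighted_graph_def by blast
    then show "R x \<le> R y"
      using reaction_term_nonneg[OF psi_diff psi_concave psi_d1 c_sigma] f_pos x
      unfolding R_def by simp
  qed
  then show ?thesis
    using Omega_psi_ge_at_max[OF G n CD psi_d1 f_pos x max]
    unfolding split lap_add Omega_psi_def by simp
qed

theorem mainTheorem13:
  fixes V :: "'v set" and adj :: "'v \<Rightarrow> 'v \<Rightarrow> bool" and w :: "'v \<Rightarrow> 'v \<Rightarrow> real"
    and mu :: "'v \<Rightarrow> real" and \<psi> :: "real \<Rightarrow> real" and n K \<sigma> :: real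
    and c :: "real \<Rightarrow> real" and u :: "'v \<Rightarrow> real \<Rightarrow> real"
  assumes G: "finite_weighted_graph V adj w mu"
    and n_pos: "n > 0" and K_pos: "K > 0"
    and CD: "CD_psi V adj w mu \<psi> n (- K)"
    and psi_diff: "\<forall>s>0. \<psi> differentiable (at s)"
    and psi_C1: "continuous_on {0<..} (deriv \<psi>)"
    and psi_concave: "concave_on {0<..} \<psi>"
    and psi_d1: "deriv \<psi> 1 = 0"
    and c_cont: "continuous_on {0..} c"
    and c_sigma: "((\<forall>t\<ge>0. c t \<ge> 0) \<and> \<sigma> \<le> 1) \<or> ((\<forall>t\<ge>0. c t \<le> 0) \<and> \<sigma> \<ge> 1)"
    and u_pos: "\<forall>x\<in>V. \<forall>t\<ge>0. u x t > 0"
    and u_C1: "\<forall>x\<in>V. continuous_on {0..} (\<lambda>t. lap V adj w mu (\<lambda>y. u y t) x + c t * u x t powr \<sigma>)"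
    and u_eq: "\<forall>x\<in>V. \<forall>t\<ge>0. ((\<lambda>s. u x s) has_real_derivative
                 (lap V adj w mu (\<lambda>y. u y t) x + c t * u x t powr \<sigma>)) (at t within {0..})"
  shows "\<forall>x\<in>V. \<forall>t>0. Gamma_psi V adj w mu \<psi> (\<lambda>y. u y t) x \<le> n / (2 * t) + K * n"
proof (intro ballI allI impI)
  fix x and t :: real
  assume "x \<in> V" and "0 < t"
  define \<Gamma> where "\<Gamma> y s = Gamma_psi V adj w mu \<psi> (\<lambda>z. u z s) y" for y s
  define \<Gamma>' where "\<Gamma>' y s = - lap V adj w mu (\<lambda>z. deriv \<psi> (u z s / u y s) * (u z s / u y s) *
      ((lap V adj w mu (\<lambda>v. u v s) z + c s * u z s powr \<sigma>) / u z s
       - (lap V adj w mu (\<lambda>v. u v s) y + c s * u y s powr \<sigma>) / u y s)) y" for y s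
  have "\<Gamma> x t < n / (2 * t) + K * n"
  proof (rule below_blowup_barrier[where F = \<Gamma> and F' = \<Gamma>' and h = "\<lambda>s. n / (2 * s) + K * n"
        and h' = "\<lambda>s. - n / (2 * s\<^sup>2)"])
    show "finite V"
      using G by (simp add: finite_weighted_graph_def)
    show "(\<Gamma> y has_real_derivative \<Gamma>' y s) (at s within {0..})" if "y \<in> V" "0 \<le> s" for y s
      unfolding \<Gamma>_def \<Gamma>'_def using u_pos u_eq that
      by (intro Gamma_psi_has_real_derivative[OF psi_diff psi_d1]) auto
    show "\<Gamma>' y s < - n / (2 * s\<^sup>2)" if "y \<in> V" "0 < s" and touch: "\<Gamma> y s = n / (2 * s) + K * n"
      and "\<forall>j\<in>V. \<Gamma> j s \<le> n / (2 * s) + K * n" for y s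
    proof -
      have "\<Gamma>' y s \<le> - 2 / n * (\<Gamma> y s)\<^sup>2 + 2 * K * \<Gamma> y s"
        unfolding \<Gamma>'_def \<Gamma>_def using that u_pos c_sigma
        by (intro Gamma_psi_deriv_le_at_max[OF G n_pos CD psi_diff psi_concave psi_d1])
          (auto simp: \<Gamma>_def)
      then show ?thesis
        using riccati_strict_supersolution(3)[OF n_pos K_pos \<open>0 < s\<close>] unfolding touch by simp
    qed
  qed (use riccati_strict_supersolution[OF n_pos K_pos] \<open>x \<in> V\<close> \<open>0 < t\<close> in auto)
  then show "Gamma_psi V adj w mu \<psi> (\<lambda>y. u y t) x \<le> n / (2 * t) + K * n"
    unfolding \<Gamma>_def by simp
qed

end
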